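(* Let $\sigma$ be a Radon measure without atoms on $\mathbb{R}^N$. There exist Borel sets $E^1_n,E^2_n\subset\mathbb{R}^N$, $n\in\mathbb{N}$, such that: (1) for every $n$, $\operatorname{dist}(E^1_n,E^2_n)>0$; (2) for $k=1,2$ the operators $P^k_nf:=\mathbf{1}_{E^k_n}f$ converge to $\tfrac12 I$ in the weak operator topology of $L^2(\sigma)$ as $n\to\infty$; (3) for every $p\in[1,\infty)$, $k=1,2$ and $f\in L^p(\sigma)$, $\lim_{n\to\infty}\|\mathbf{1}_{E^k_n}f\|_{L^p(\sigma)}=2^{-1/p}\|f\|_{L^p(\sigma)}$. *)

theory Defs
  imports "HOL-Analysis.Analysis"
begin

text \<open>A Radon measure on a Euclidean space: a Borel measure that is finite on compact sets
(on R^N local finiteness implies regularity).\<close>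
definition radon_measure :: "'a::euclidean_space measure \<Rightarrow> bool" where
  "radon_measure M \<longleftrightarrow> sets M = sets borel \<and> (\<forall>K. compact K \<longrightarrow> emeasure M K < \<infinity>)"

definition atomless :: "'a measure \<Rightarrow> bool" where
  "atomless M \<longleftrightarrow> (\<forall>x \<in> space M. emeasure M {x} = 0)"

definition in_Lp :: "real \<Rightarrow> 'a measure \<Rightarrow> ('a \<Rightarrow> real) \<Rightarrow> bool" where
  "in_Lp p M f \<longleftrightarrow> f \<in> borel_measurable M \<and> integrable M (\<lambda>x. \<bar>f x\<bar> powr p)"

definition Lp_norm :: "real \<Rightarrow> 'a measure \<Rightarrow> ('a \<Rightarrow> real) \<Rightarrow> real" where
  "Lp_norm p M f = (\<integral>x. \<bar>f x\<bar> powr p \<partial>M) powr (1 / p)"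

end

theory Submission
  imports Defs
begin

text \<open>
  By inner and outer regularity, every set of finite measure is approximated in measure by
  finite unions of sets from a countable basis, so a countable family \<open>D\<^sub>j\<close> of bounded open
  sets is dense in the finite-measure sets. Since \<open>\<sigma>\<close> has no atoms, small balls have small
  measure, and covering a compact set by such balls lets one split any set of finite measure
  into two disjoint compact pieces of almost half its measure, even simultaneously relative to
  finitely many given sets. Splitting \<open>D\<^sub>0 \<union> \<dots> \<union> D\<^sub>n\<close> relative to \<open>D\<^sub>0, \<dots>, D\<^sub>n\<close> with error
  \<open>1/(n+1)\<close> gives disjoint compact sets \<open>E\<^sup>1\<^sub>n, E\<^sup>2\<^sub>n\<close> with \<open>\<sigma>(E\<^sup>k\<^sub>n \<inter> A) \<rightarrow> \<sigma>(A)/2\<close> for every \<open>A\<close> of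
  finite measure; disjoint compact sets have positive distance. Linearity and density of
  simple functions in \<open>L\<^sup>1\<close> turn this into \<open>\<integral>\<^bsub>E\<^sup>k\<^sub>n\<^esub> h \<rightarrow> \<integral>h/2\<close> for all integrable \<open>h\<close>, which
  gives both the weak operator convergence (with \<open>h = fg\<close>) and the \<open>L\<^sup>p\<close> limits
  (with \<open>h = |f|\<^sup>p\<close>).
\<close>

lemma discrete_IVT:
  fixes g :: "nat \<Rightarrow> real"
  assumes "g 0 \<le> T" "T \<le> g m" "\<And>i. i < m \<Longrightarrow> g (Suc i) \<le> g i + d" "d \<ge> 0"
  shows "\<exists>i\<le>m. g i \<le> T \<and> T \<le> g i + d"
  using assms
proof (induction m)
  case (Suc m)
  show ?case
  proof (cases "T \<le> g m")
    case True
    then show ?thesis using Suc by (metis le_SucI less_SucI)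
  next
    case False
    then show ?thesis using Suc.prems by (intro exI[of _ m]) force
  qed
qed auto

lemma tendsto_of_approximants:
  fixes c :: "nat \<Rightarrow> real"
  assumes "\<And>i. (\<lambda>n. a i n) \<longlonglongrightarrow> b i"
    and "\<And>i n. \<bar>c n - a i n\<bar> \<le> \<delta> i" and "\<And>i. \<bar>L - b i\<bar> \<le> \<delta> i"
    and "\<delta> \<longlonglongrightarrow> 0"
  shows "c \<longlonglongrightarrow> L"
proof (rule LIMSEQ_I)
  fix r :: real assume "r > 0"
  then obtain i where i: "\<delta> i < r / 3"
    using order_tendstoD(2)[OF assms(4), of "r / 3"] by (auto simp: eventually_sequentially)
  obtain N where N: "\<And>n. n \<ge> N \<Longrightarrow> \<bar>a i n - b i\<bar> < r / 3"
    using LIMSEQ_D[OF assms(1), of "r / 3" i] \<open>r > 0\<close> by auto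
  have "\<bar>c n - L\<bar> < r" if "n \<ge> N" for n
    using assms(2)[of n i] assms(3)[of i] N[OF that] i by linarith
  then show "\<exists>N. \<forall>n\<ge>N. norm (c n - L) < r" by auto
qed

lemma measure_Int_symdiff_bound:
  assumes "X \<in> fmeasurable M" "Y \<in> fmeasurable M" "Z \<in> sets M"
  shows "\<bar>measure M (Z \<inter> X) - measure M (Z \<inter> Y)\<bar> \<le> measure M (X - Y) + measure M (Y - X)"
proof -
  have le: "measure M (Z \<inter> X) - measure M (Z \<inter> Y) \<le> measure M (X - Y)"
    if "X \<in> fmeasurable M" "Y \<in> fmeasurable M" for X Y
  proof -
    have "Z \<inter> X \<in> fmeasurable M" "Z \<inter> Y \<in> fmeasurable M"
      using that assms(3) fmeasurable_Int_fmeasurable by (metis Int_commute)+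
    then have "measure M (Z \<inter> X) - measure M (Z \<inter> Y) \<le> measure M (Z \<inter> X - Z \<inter> Y)"
      by (rule measure_diff_le_measure_setdiff)
    also have "\<dots> \<le> measure M (X - Y)"
      using that assms(3) by (intro measure_mono_fmeasurable fmeasurable_Diff) auto
    finally show ?thesis .
  qed
  show ?thesis
    using le[OF assms(1,2)] le[OF assms(2,1)] measure_nonneg[of M "X - Y"] measure_nonneg[of M "Y - X"]
    by linarith
qed

lemma measure_Un_Int_disjoint:
  assumes "X \<in> fmeasurable M" "Y \<in> fmeasurable M" "X \<inter> Y = {}" "D \<in> sets M"
  shows "measure M ((X \<union> Y) \<inter> D) = measure M (X \<inter> D) + measure M (Y \<inter> D)"
proof -
  have "(X \<union> Y) \<inter> D = (X \<inter> D) \<union> (Y \<inter> D)" by auto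
  moreover have "X \<inter> D \<in> fmeasurable M" "Y \<inter> D \<in> fmeasurable M"
    using assms by (auto intro: fmeasurable_Int_fmeasurable)
  ultimately show ?thesis
    using assms(3) by (simp add: measure_Union fmeasurableD fmeasurableD2 disjoint_iff)
qed

lemma measure_Un_near_half:
  assumes "Ka \<subseteq> S \<inter> D" "Kb \<subseteq> S - D" "Ka \<in> fmeasurable M" "Kb \<in> fmeasurable M"
    and "S \<inter> D \<in> fmeasurable M" "S - D \<in> fmeasurable M" "D' \<in> sets M"
    and "\<bar>measure M (Ka \<inter> D') - measure M (S \<inter> D \<inter> D') / 2\<bar> \<le> d"
    and "\<bar>measure M (Kb \<inter> D') - measure M ((S - D) \<inter> D') / 2\<bar> \<le> e"
  shows "\<bar>measure M ((Ka \<union> Kb) \<inter> D') - measure M (S \<inter> D') / 2\<bar> \<le> d + e"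
proof -
  have "(S \<inter> D) \<inter> (S - D) = {}" "(S \<inter> D) \<union> (S - D) = S" by auto
  then have S_eq: "measure M (S \<inter> D') = measure M (S \<inter> D \<inter> D') + measure M ((S - D) \<inter> D')"
    using measure_Un_Int_disjoint[OF assms(5,6) _ assms(7)] by (simp add: Int_assoc)
  have K_eq: "measure M ((Ka \<union> Kb) \<inter> D') = measure M (Ka \<inter> D') + measure M (Kb \<inter> D')"
    using assms(1-4,7) by (intro measure_Un_Int_disjoint) auto
  show ?thesis
    unfolding S_eq K_eq add_divide_distrib
    using assms(8,9)[THEN abs_le_D1] assms(8,9)[THEN abs_le_D2]
    by (intro abs_leI) linarith+
qed

definition asymptotically_halving :: "'a measure \<Rightarrow> (nat \<Rightarrow> 'a set) \<Rightarrow> bool" where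
  "asymptotically_halving M E \<longleftrightarrow>
     (\<forall>A \<in> fmeasurable M. (\<lambda>n. measure M (E n \<inter> A)) \<longlonglongrightarrow> measure M A / 2)"

lemma asymptotically_halving_insert_null:
  assumes "asymptotically_halving M E" "\<And>n. E n \<in> sets M" "\<And>n. {a n} \<in> null_sets M"
  shows "asymptotically_halving M (\<lambda>n. insert (a n) (E n))"
  unfolding asymptotically_halving_def
proof
  fix A assume A: "A \<in> fmeasurable M"
  have "measure M (insert (a n) (E n) \<inter> A) = measure M (E n \<inter> A)" for n
  proof -
    have "insert (a n) (E n) \<inter> A = (E n \<inter> A) \<union> ({a n} \<inter> A)" by auto
    moreover have "{a n} \<inter> A \<in> null_sets M"
      using assms(3) A by (intro null_set_Int2) auto
    moreover have "E n \<inter> A \<in> sets M"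
      using assms(2) A by auto
    ultimately show ?thesis
      by (metis measure_Un_null_set)
  qed
  then show "(\<lambda>n. measure M (insert (a n) (E n) \<inter> A)) \<longlonglongrightarrow> measure M A / 2"
    using assms(1) A by (simp add: asymptotically_halving_def)
qed

lemma asymptotically_halving_if_dense:
  assumes D: "\<And>j. D j \<in> fmeasurable M"
    and dense: "\<And>A e. A \<in> fmeasurable M \<Longrightarrow> e > 0 \<Longrightarrow>
                  \<exists>j. measure M (A - D j) + measure M (D j - A) < e"
    and E: "\<And>n. E n \<in> sets M"
    and halves: "\<And>j n. j \<le> n \<Longrightarrow> \<bar>measure M (E n \<inter> D j) - measure M (D j) / 2\<bar> \<le> 1 / Suc n"
  shows "asymptotically_halving M E"
  unfolding asymptotically_halving_def
proof
  fix A assume A: "A \<in> fmeasurable M"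
  define \<delta> where "\<delta> i = 1 / real (Suc i)" for i
  have "\<exists>j. measure M (A - D j) + measure M (D j - A) < \<delta> i" for i
    using dense[OF A] by (simp add: \<delta>_def)
  then obtain J where J: "\<And>i. measure M (A - D (J i)) + measure M (D (J i) - A) < \<delta> i"
    by metis
  show "(\<lambda>n. measure M (E n \<inter> A)) \<longlonglongrightarrow> measure M A / 2"
  proof (rule tendsto_of_approximants)
    fix i
    have "(\<lambda>n. measure M (E n \<inter> D (J i)) - measure M (D (J i)) / 2) \<longlonglongrightarrow> 0"
    proof (rule Lim_null_comparison)
      show "\<forall>\<^sub>F n in sequentially. norm (measure M (E n \<inter> D (J i)) - measure M (D (J i)) / 2)
              \<le> 1 / real (Suc n)"
        using halves by (auto simp: eventually_sequentially intro!: exI[of _ "J i"])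
    qed (use LIMSEQ_inverse_real_of_nat in \<open>simp add: inverse_eq_divide\<close>)
    then show "(\<lambda>n. measure M (E n \<inter> D (J i))) \<longlonglongrightarrow> measure M (D (J i)) / 2"
      by (simp add: LIM_zero_iff)
    show "\<bar>measure M (E n \<inter> A) - measure M (E n \<inter> D (J i))\<bar> \<le> \<delta> i" for n
      using measure_Int_symdiff_bound[OF A D[of "J i"] E[of n]] J[of i] by linarith
    show "\<bar>measure M A / 2 - measure M (D (J i)) / 2\<bar> \<le> \<delta> i"
      using measure_diff_le_measure_setdiff[OF A D[of "J i"]]
        measure_diff_le_measure_setdiff[OF D[of "J i"] A] J[of i]
        measure_nonneg[of M "A - D (J i)"] measure_nonneg[of M "D (J i) - A"]
      by linarith
  qed (use LIMSEQ_inverse_real_of_nat in \<open>simp add: \<delta>_def inverse_eq_divide\<close>)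
qed

lemma abs_integral_diff_le:
  fixes f g w :: "'a \<Rightarrow> real"
  assumes "integrable M f" "integrable M g" "integrable M w"
    and "\<And>x. x \<in> space M \<Longrightarrow> \<bar>f x - g x\<bar> \<le> w x"
  shows "\<bar>(\<integral>x. f x \<partial>M) - (\<integral>x. g x \<partial>M)\<bar> \<le> (\<integral>x. w x \<partial>M)"
proof -
  have "\<bar>(\<integral>x. f x \<partial>M) - (\<integral>x. g x \<partial>M)\<bar> = \<bar>\<integral>x. f x - g x \<partial>M\<bar>"
    using assms(1,2) by simp
  also have "\<dots> \<le> (\<integral>x. \<bar>f x - g x\<bar> \<partial>M)"
    using integral_norm_bound[of M "\<lambda>x. f x - g x"] by simp
  also have "\<dots> \<le> (\<integral>x. w x \<partial>M)"
    using assms by (intro integral_mono) auto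
  finally show ?thesis .
qed

lemma tendsto_L1_dominated:
  fixes f :: "'a \<Rightarrow> real"
  assumes "\<And>i. integrable M (s i)" "integrable M f"
    and "\<And>x. x \<in> space M \<Longrightarrow> (\<lambda>i. s i x) \<longlonglongrightarrow> f x"
    and "\<And>i x. x \<in> space M \<Longrightarrow> norm (s i x) \<le> 2 * norm (f x)"
  shows "(\<lambda>i. \<integral>x. \<bar>s i x - f x\<bar> \<partial>M) \<longlonglongrightarrow> 0"
proof -
  have "(\<lambda>i. \<integral>x. \<bar>s i x - f x\<bar> \<partial>M) \<longlonglongrightarrow> (\<integral>x. 0 \<partial>M)"
  proof (rule integral_dominated_convergence[where w="\<lambda>x. 3 * \<bar>f x\<bar>"])
    show "AE x in M. (\<lambda>i. \<bar>s i x - f x\<bar>) \<longlonglongrightarrow> 0"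
      using assms(3) by (intro AE_I2) (simp add: tendsto_rabs_zero LIM_zero)
    show "AE x in M. norm \<bar>s i x - f x\<bar> \<le> 3 * \<bar>f x\<bar>" for i
      using assms(4) by (intro AE_I2) (smt (verit) real_norm_def)
  qed (use assms(1,2) in auto)
  then show ?thesis
    by simp
qed

lemma asymptotically_halving_integral:
  fixes h :: "'a \<Rightarrow> real"
  assumes halving: "asymptotically_halving M E" and E: "\<And>n. E n \<in> sets M"
    and "integrable M h"
  shows "(\<lambda>n. \<integral>x. indicator (E n) x * h x \<partial>M) \<longlonglongrightarrow> (1/2) * (\<integral>x. h x \<partial>M)"
proof -
  have int_ind: "integrable M (\<lambda>x. indicator (E n) x * u x)" if "integrable M u"
    for n and u :: "'a \<Rightarrow> real"
    using integrable_real_mult_indicator[OF E that] by (simp add: mult.commute)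
  from \<open>integrable M h\<close> show ?thesis
  proof (induction rule: integrable_induct)
    case (base A c)
    have "(\<lambda>x. indicator (E n) x * (indicator A x *\<^sub>R c)) = (\<lambda>x. indicator (E n \<inter> A) x * c)" for n
      by (auto simp: indicator_def fun_eq_iff)
    moreover have "A \<in> fmeasurable M" "E n \<inter> A \<in> sets M" for n
      using base E by (auto intro: fmeasurableI)
    moreover have "(\<lambda>n. measure M (E n \<inter> A) * c) \<longlonglongrightarrow> (measure M A / 2) * c"
      using halving \<open>A \<in> fmeasurable M\<close>
      by (intro tendsto_mult_right) (simp add: asymptotically_halving_def)
    ultimately show ?case
      by (simp add: Int_absorb2 sets.sets_into_space)
  next
    case (add f g)
    show ?case
      using tendsto_add[OF add.IH] add.hyps int_ind by (simp add: distrib_left)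
  next
    case (lim f s)
    note int_s = lim.hyps(1) and int_f = lim.hyps(4)
    have L1: "(\<lambda>i. \<integral>x. \<bar>s i x - f x\<bar> \<partial>M) \<longlonglongrightarrow> 0"
      using int_s int_f lim.hyps(2,3) by (rule tendsto_L1_dominated)
    show ?case
    proof (rule tendsto_of_approximants[OF lim.IH _ _ L1])
      show "\<bar>(\<integral>x. indicator (E n) x * f x \<partial>M) - (\<integral>x. indicator (E n) x * s i x \<partial>M)\<bar>
              \<le> (\<integral>x. \<bar>s i x - f x\<bar> \<partial>M)" for i n
        using int_s int_f int_ind
        by (intro abs_integral_diff_le) (auto simp: indicator_def)
      show "\<bar>(1/2) * (\<integral>x. f x \<partial>M) - (1/2) * (\<integral>x. s i x \<partial>M)\<bar>
              \<le> (\<integral>x. \<bar>s i x - f x\<bar> \<partial>M)" for i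
      proof -
        have "\<bar>(\<integral>x. f x \<partial>M) - (\<integral>x. s i x \<partial>M)\<bar> \<le> (\<integral>x. \<bar>s i x - f x\<bar> \<partial>M)"
          using int_s int_f by (intro abs_integral_diff_le) auto
        then show ?thesis
          by simp
      qed
    qed
  qed
qed

lemma inner_regular_fmeasurable:
  fixes M :: "'a::{second_countable_topology, complete_space} measure"
  assumes M: "sets M = sets borel" and A: "A \<in> fmeasurable M" and "e > 0"
  obtains K where "compact K" "K \<subseteq> A" "measure M A < measure M K + e"
proof (cases "measure M A < e")
  case True
  then show ?thesis by (intro that[of "{}"]) auto
next
  case False
  define N where "N = density M (indicator A)"
  have N: "sets N = sets borel" "emeasure N X = emeasure M (A \<inter> X)" if "X \<in> sets borel" for X
    using A that M unfolding N_def by (auto intro: emeasure_restricted)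
  have "space N = UNIV"
    using sets_eq_imp_space_eq[OF N(1)[OF sets.top]] by simp
  then have "emeasure N (space N) \<noteq> \<infinity>"
    using N(2)[of UNIV] fmeasurableD2[OF A] by simp
  then have "emeasure M A = (SUP K \<in> {K. K \<subseteq> A \<and> compact K}. emeasure N K)"
    using inner_regular[OF N(1)[OF sets.top] _, of A] N[of A] A M by (auto simp: fmeasurable_def)
  moreover have "ennreal (measure M A - e) < emeasure M A"
    using A \<open>e > 0\<close> False by (simp add: emeasure_eq_measure2 ennreal_less_iff)
  ultimately obtain K where K: "K \<subseteq> A" "compact K" "ennreal (measure M A - e) < emeasure N K"
    by (auto simp: less_SUP_iff)
  have "emeasure N K = ennreal (measure M K)"
    using N(2)[of K] K A M fmeasurableI2[of A M K]
    by (simp add: Int_absorb1 compact_imp_closed borel_closed emeasure_eq_measure2)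
  then have "measure M A - e < measure M K"
    using K(3) False by (simp add: ennreal_less_iff)
  then show ?thesis using K by (intro that) auto
qed

lemma outer_regular_fmeasurable:
  fixes M :: "'a::{second_countable_topology, complete_space} measure"
  assumes M: "sets M = sets borel" and A: "A \<in> sets M" "A \<subseteq> W"
    and W: "open W" "W \<in> fmeasurable M" and "e > 0"
  obtains U where "open U" "A \<subseteq> U" "U \<subseteq> W" "measure M U < measure M A + e"
proof -
  define N where "N = density M (indicator W)"
  have N: "sets N = sets borel" "emeasure N X = emeasure M (W \<inter> X)" if "X \<in> sets borel" for X
    using W that M unfolding N_def by (auto intro: emeasure_restricted)
  have A_fin: "A \<in> fmeasurable M"
    using A W by (auto intro: fmeasurableI2)
  have "space N = UNIV"
    using sets_eq_imp_space_eq[OF N(1)[OF sets.top]] by simp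
  then have "emeasure N (space N) \<noteq> \<infinity>"
    using N(2)[of UNIV] fmeasurableD2[OF W(2)] by simp
  then have "emeasure M A = (INF U \<in> {U. A \<subseteq> U \<and> open U}. emeasure N U)"
    using outer_regular[OF N(1)[OF sets.top] _, of A] N[of A] A M by (auto simp: Int_absorb1)
  moreover have "emeasure M A < ennreal (measure M A + e)"
    using A_fin \<open>e > 0\<close> by (simp add: emeasure_eq_measure2 ennreal_less_iff)
  ultimately obtain U where U: "A \<subseteq> U" "open U" "emeasure N U < ennreal (measure M A + e)"
    by (auto simp: INF_less_iff)
  have WU: "W \<inter> U \<in> fmeasurable M"
    using U W M by (intro fmeasurableI2[OF W(2)]) auto
  have "measure M (W \<inter> U) < measure M A + e"
    using U(3) N(2)[of U] U(2) WU by (simp add: emeasure_eq_measure2 ennreal_less_iff)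
  then show ?thesis
    using U W A by (intro that[of "W \<inter> U"]) auto
qed

lemma compact_subset_finite_basis_union:
  assumes "topological_basis B" "compact K" "open U" "K \<subseteq> U"
  obtains X where "finite X" "X \<subseteq> B" "K \<subseteq> \<Union>X" "\<Union>X \<subseteq> U"
proof -
  let ?C = "{b \<in> B. b \<subseteq> U}"
  have "K \<subseteq> \<Union>?C"
  proof
    fix x assume "x \<in> K"
    then obtain b where "b \<in> B" "x \<in> b" "b \<subseteq> U"
      using topological_basisE[OF assms(1,3)] assms(4) by blast
    then show "x \<in> \<Union>?C" by blast
  qed
  moreover have "open b" if "b \<in> ?C" for b
    using that topological_basis_open[OF assms(1)] by blast
  ultimately obtain X where "X \<subseteq> ?C" "finite X" "K \<subseteq> \<Union>X"
    using compactE[OF assms(2), of ?C] by blast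
  then show ?thesis by (intro that) auto
qed

lemma bounded_avoid_antipodal:
  fixes S :: "'a::euclidean_space set"
  assumes "bounded S"
  obtains a where "a \<notin> S" "- a \<notin> S" "a \<noteq> - a"
proof -
  obtain b where b: "b > 0" "\<And>x. x \<in> S \<Longrightarrow> norm x \<le> b"
    using assms by (auto simp: bounded_pos)
  obtain v :: 'a where "v \<in> Basis"
    using nonempty_Basis by blast
  define a where "a = (b + 1) *\<^sub>R v"
  have "norm a = b + 1" "norm (- a) = b + 1"
    using \<open>v \<in> Basis\<close> b(1) by (simp_all add: a_def)
  moreover have "a \<noteq> - a"
  proof
    assume "a = - a"
    then have "2 *\<^sub>R a = 0" by (metis scaleR_2 add.right_inverse)
    with \<open>norm a = b + 1\<close> b(1) show False by simp
  qed
  ultimately show ?thesis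
    using b by (intro that[of a]) force+
qed

context
  fixes M :: "'a::euclidean_space measure"
  assumes radon: "radon_measure M"
begin

lemma sets_eq_borel: "sets M = sets borel"
  using radon by (simp add: radon_measure_def)

lemma space_eq_UNIV: "space M = UNIV"
  using sets_eq_imp_space_eq[OF sets_eq_borel] by simp

lemma fmeasurable_bounded:
  assumes "A \<in> sets borel" "bounded A"
  shows "A \<in> fmeasurable M"
proof -
  obtain r x where "A \<subseteq> cball x r"
    using assms(2) bounded_subset_cball by blast
  moreover have "cball x r \<in> fmeasurable M"
    using radon by (auto simp: radon_measure_def sets_eq_borel intro: fmeasurableI)
  ultimately show ?thesis
    using assms(1) by (auto simp: sets_eq_borel intro: fmeasurableI2)
qed

lemma compact_fmeasurable: "compact K \<Longrightarrow> K \<in> fmeasurable M"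
  by (simp add: fmeasurable_bounded compact_imp_bounded compact_imp_closed borel_closed)

lemma measure_cball_small:
  assumes "emeasure M {x} = 0" "d > 0"
  obtains r where "r > 0" "measure M (cball x r) < d"
proof -
  let ?B = "\<lambda>i::nat. cball x (1 / Suc i)"
  have B_fin: "?B i \<in> fmeasurable M" for i
    by (rule compact_fmeasurable[OF compact_cball])
  have "decseq ?B"
    by (auto simp: decseq_def intro!: subset_cball divide_left_mono)
  then have "(\<lambda>i. measure M (?B i)) \<longlonglongrightarrow> measure M (\<Inter>i. ?B i)"
    using B_fin by (intro Lim_measure_decseq) (auto simp: fmeasurable_def less_top[symmetric])
  moreover have "(\<Inter>i. ?B i) = {x}"
  proof (intro equalityI subsetI)
    fix y assume y: "y \<in> (\<Inter>i. ?B i)"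
    show "y \<in> {x}"
    proof (rule ccontr)
      assume "y \<notin> {x}"
      then obtain n where "1 / real (Suc n) < dist x y"
        using nat_approx_posE[of "dist x y"] by auto
      moreover from y have "y \<in> ?B n" by blast
      then have "dist x y \<le> 1 / real (Suc n)" by (simp only: mem_cball)
      ultimately show False by linarith
    qed
  qed auto
  ultimately have "(\<lambda>i. measure M (?B i)) \<longlonglongrightarrow> 0"
    using assms(1) by (simp add: measure_def)
  then obtain i where "measure M (?B i) < d"
    using order_tendstoD(2)[of _ 0 sequentially d] assms(2) by (auto simp: eventually_sequentially)
  then show ?thesis by (intro that[of "1 / Suc i"]) auto
qed

text \<open>Cover \<open>K\<close> by finitely many balls of measure \<open>< \<delta>\<close> and add them one at a time: the
  measure of the part of \<open>K\<close> covered so far grows from \<open>0\<close> to \<open>\<sigma>(K)\<close> in steps \<open>< \<delta>\<close>.\<close>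

lemma compact_subset_near_half:
  assumes "atomless M" "compact K" "\<delta> > 0"
  obtains K' where "compact K'" "K' \<subseteq> K"
    "measure M K' \<le> measure M K / 2" "measure M K / 2 \<le> measure M K' + \<delta>"
proof -
  have "\<exists>r>0. measure M (cball x r) < \<delta>" for x
    using measure_cball_small[of x \<delta>] \<open>atomless M\<close> \<open>\<delta> > 0\<close>
    by (auto simp: atomless_def space_eq_UNIV)
  then obtain r where r: "\<And>x. r x > 0 \<and> measure M (cball x (r x)) < \<delta>"
    by metis
  have "K \<subseteq> (\<Union>x\<in>K. ball x (r x))"
    using r by auto
  then obtain C where C: "C \<subseteq> K" "finite C" "K \<subseteq> (\<Union>x\<in>C. ball x (r x))"
    using compactE_image[OF \<open>compact K\<close>, of K "\<lambda>x. ball x (r x)"] by blast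
  obtain xs where xs: "set xs = C"
    using finite_list[OF C(2)] by blast
  define B where "B i = cball (xs ! i) (r (xs ! i))" for i
  define g where "g i = measure M (K \<inter> (\<Union>l<i. B l))" for i
  have "K \<subseteq> (\<Union>i<length xs. B i)"
    using C(3) xs by (force simp: B_def in_set_conv_nth)
  then have g_end: "g (length xs) = measure M K"
    by (simp add: g_def Int_absorb2)
  have K_fin: "K \<in> fmeasurable M" and B_fin: "B i \<in> fmeasurable M" for i
    using \<open>compact K\<close> by (simp_all add: B_def compact_fmeasurable)
  have "g (Suc i) \<le> g i + \<delta>" for i
  proof -
    have "K \<inter> (\<Union>l<Suc i. B l) = (K \<inter> (\<Union>l<i. B l)) \<union> (K \<inter> B i)"
      by (auto simp: lessThan_Suc)
    then have "g (Suc i) \<le> g i + measure M (K \<inter> B i)"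
      unfolding g_def using K_fin B_fin by (metis measure_Un_le sets.Int sets.finite_UN finite_lessThan fmeasurableD)
    also have "measure M (K \<inter> B i) \<le> measure M (B i)"
      using B_fin K_fin by (intro measure_mono_fmeasurable) auto
    also have "\<dots> < \<delta>"
      using r by (simp add: B_def)
    finally show ?thesis by simp
  qed
  then obtain i where "g i \<le> measure M K / 2" "measure M K / 2 \<le> g i + \<delta>"
    using discrete_IVT[of g "measure M K / 2" "length xs" \<delta>] g_end \<open>\<delta> > 0\<close>
    by (auto simp: g_def)
  moreover have "compact (K \<inter> (\<Union>l<i. B l))"
    unfolding B_def by (intro compact_Int_closed \<open>compact K\<close> closed_UN) auto
  ultimately show ?thesis
    by (intro that[of "K \<inter> (\<Union>l<i. B l)"]) (auto simp: g_def)
qed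

lemma compact_halving:
  assumes "atomless M" "S \<in> fmeasurable M" "d > 0"
  obtains K1 K2 where "compact K1" "compact K2" "K1 \<subseteq> S" "K2 \<subseteq> S" "K1 \<inter> K2 = {}"
    "\<bar>measure M K1 - measure M S / 2\<bar> \<le> d" "\<bar>measure M K2 - measure M S / 2\<bar> \<le> d"
proof -
  define \<delta> where "\<delta> = d / 3"
  have "\<delta> > 0" using \<open>d > 0\<close> by (simp add: \<delta>_def)
  obtain K where K: "compact K" "K \<subseteq> S" "measure M S < measure M K + \<delta>"
    using inner_regular_fmeasurable[OF sets_eq_borel assms(2) \<open>\<delta> > 0\<close>] .
  have "measure M K \<le> measure M S"
    using K assms(2) compact_fmeasurable by (intro measure_mono_fmeasurable) auto
  obtain K1 where K1: "compact K1" "K1 \<subseteq> K"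
    "measure M K1 \<le> measure M K / 2" "measure M K / 2 \<le> measure M K1 + \<delta>"
    using compact_subset_near_half[OF assms(1) K(1) \<open>\<delta> > 0\<close>] .
  have K_fin: "K \<in> fmeasurable M" and K1_fin: "K1 \<in> fmeasurable M"
    using K(1) K1(1) by (simp_all add: compact_fmeasurable)
  then have "K - K1 \<in> fmeasurable M" by auto
  then obtain K2 where K2: "compact K2" "K2 \<subseteq> K - K1" "measure M (K - K1) < measure M K2 + \<delta>"
    using inner_regular_fmeasurable[OF sets_eq_borel _ \<open>\<delta> > 0\<close>] by blast
  have "measure M K2 \<le> measure M (K - K1)"
    using K2 \<open>K - K1 \<in> fmeasurable M\<close> compact_fmeasurable by (intro measure_mono_fmeasurable) auto
  moreover have "measure M (K - K1) = measure M K - measure M K1"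
    using K_fin K1_fin K1(2) by (intro measure_Diff) (auto simp: fmeasurableD2)
  ultimately show ?thesis
    using K K1 K2 \<open>measure M K \<le> measure M S\<close>
    by (intro that[of K1 K2]) (auto simp: \<delta>_def abs_le_iff)
qed

text \<open>Halve \<open>S \<inter> D\<close> and \<open>S - D\<close> separately and take unions; the whole-space bound is
  carried along because it is what controls the new set \<open>D\<close>.\<close>

lemma compact_halving_relative:
  assumes "atomless M" "S \<in> fmeasurable M" "d > 0" "set Ds \<subseteq> sets borel"
  shows "\<exists>K1 K2. compact K1 \<and> compact K2 \<and> K1 \<subseteq> S \<and> K2 \<subseteq> S \<and> K1 \<inter> K2 = {} \<and>
    (\<forall>K \<in> {K1, K2}. \<forall>D \<in> insert UNIV (set Ds). \<bar>measure M (K \<inter> D) - measure M (S \<inter> D) / 2\<bar> \<le> d)"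
  using assms(2-4)
proof (induction Ds arbitrary: S d)
  case Nil
  obtain K1 K2 where "compact K1" "compact K2" "K1 \<subseteq> S" "K2 \<subseteq> S" "K1 \<inter> K2 = {}"
    "\<bar>measure M K1 - measure M S / 2\<bar> \<le> d" "\<bar>measure M K2 - measure M S / 2\<bar> \<le> d"
    using compact_halving[OF assms(1) Nil(1,2)] .
  then show ?case
    by (intro exI[of _ K1] exI[of _ K2]) simp
next
  case (Cons D Ds)
  have D: "D \<in> sets borel" and Ds: "set Ds \<subseteq> sets borel"
    using Cons.prems by auto
  let ?S1 = "S \<inter> D" and ?S2 = "S - D"
  have S12: "?S1 \<in> fmeasurable M" "?S2 \<in> fmeasurable M"
    using Cons.prems(1) D by (auto simp: sets_eq_borel intro: fmeasurable_Int_fmeasurable fmeasurable_Diff)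
  have "d / 2 > 0" using Cons.prems by simp
  obtain K1a K2a where A: "compact K1a" "compact K2a" "K1a \<subseteq> ?S1" "K2a \<subseteq> ?S1" "K1a \<inter> K2a = {}"
    "\<forall>K \<in> {K1a, K2a}. \<forall>D' \<in> insert UNIV (set Ds).
       \<bar>measure M (K \<inter> D') - measure M (?S1 \<inter> D') / 2\<bar> \<le> d / 2"
    using Cons.IH[OF S12(1) \<open>d / 2 > 0\<close> Ds] by blast
  obtain K1b K2b where B: "compact K1b" "compact K2b" "K1b \<subseteq> ?S2" "K2b \<subseteq> ?S2" "K1b \<inter> K2b = {}"
    "\<forall>K \<in> {K1b, K2b}. \<forall>D' \<in> insert UNIV (set Ds).
       \<bar>measure M (K \<inter> D') - measure M (?S2 \<inter> D') / 2\<bar> \<le> d / 2"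
    using Cons.IH[OF S12(2) \<open>d / 2 > 0\<close> Ds] by blast
  have combine: "\<bar>measure M ((Ka \<union> Kb) \<inter> D') - measure M (S \<inter> D') / 2\<bar> \<le> d"
    if Ka: "Ka \<in> {K1a, K2a}" and Kb: "Kb \<in> {K1b, K2b}" and D': "D' \<in> insert UNIV (set (D # Ds))"
    for Ka Kb D'
  proof -
    have sub: "Ka \<subseteq> ?S1" "Kb \<subseteq> ?S2" and fin: "Ka \<in> fmeasurable M" "Kb \<in> fmeasurable M"
      using Ka Kb A B by (auto simp: compact_fmeasurable)
    show ?thesis
    proof (cases "D' = D")
      case True
      then have "(Ka \<union> Kb) \<inter> D' = Ka \<inter> UNIV" "S \<inter> D' = ?S1 \<inter> UNIV"
        using sub by auto
      moreover have "\<bar>measure M (Ka \<inter> UNIV) - measure M (?S1 \<inter> UNIV) / 2\<bar> \<le> d / 2"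
        using A(6) Ka by blast
      ultimately show ?thesis
        using \<open>d > 0\<close> by simp
    next
      case False
      then have D': "D' \<in> insert UNIV (set Ds)" and D'_sets: "D' \<in> sets M"
        using D' Ds by (auto simp: sets_eq_borel)
      have "\<bar>measure M (Ka \<inter> D') - measure M (?S1 \<inter> D') / 2\<bar> \<le> d / 2"
        and "\<bar>measure M (Kb \<inter> D') - measure M (?S2 \<inter> D') / 2\<bar> \<le> d / 2"
        using A(6) B(6) Ka Kb D' by blast+
      from measure_Un_near_half[OF sub fin S12 D'_sets this] show ?thesis
        by simp
    qed
  qed
  show ?case
  proof (intro exI conjI)
    show "compact (K1a \<union> K1b)" "compact (K2a \<union> K2b)"
      using A B by (simp_all add: compact_Un)
    show "K1a \<union> K1b \<subseteq> S" "K2a \<union> K2b \<subseteq> S" "(K1a \<union> K1b) \<inter> (K2a \<union> K2b) = {}"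
      using A(3-5) B(3-5) by auto
    show "\<forall>K \<in> {K1a \<union> K1b, K2a \<union> K2b}. \<forall>D' \<in> insert UNIV (set (D # Ds)).
            \<bar>measure M (K \<inter> D') - measure M (S \<inter> D') / 2\<bar> \<le> d"
      using combine by blast
  qed
qed

lemma fmeasurable_approx_compact_open:
  assumes A: "A \<in> fmeasurable M" and "e > 0"
  obtains K U where "compact K" "open U" "bounded U" "K \<subseteq> U"
    "measure M (A - K) + measure M (U - A) < e"
proof -
  have "(\<Union>n. ball 0 (real n)) = (UNIV :: 'a set)"
    using reals_Archimedean2 by (auto simp: dist_norm)
  moreover have "(\<lambda>n. measure M (A \<inter> ball 0 (real n))) \<longlonglongrightarrow> measure M (\<Union>n. A \<inter> ball 0 (real n))"
    using A calculation by (intro Lim_measure_incseq) (auto simp: incseq_def sets_eq_borel fmeasurableD2)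
  ultimately have "(\<lambda>n. measure M (A \<inter> ball 0 (real n))) \<longlonglongrightarrow> measure M A"
    by simp
  then obtain R where R: "measure M A - e / 3 < measure M (A \<inter> ball 0 (real R))"
    using order_tendstoD(1)[of _ "measure M A" sequentially "measure M A - e / 3"] \<open>e > 0\<close>
    by (force simp: eventually_sequentially)
  define A' where "A' = A \<inter> ball 0 (real R)"
  have ball_fin: "ball 0 (real R) \<in> fmeasurable M"
    by (simp add: fmeasurable_bounded)
  have A'_fin: "A' \<in> fmeasurable M"
    using A by (auto simp: A'_def sets_eq_borel intro: fmeasurable_Int_fmeasurable)
  obtain K where K: "compact K" "K \<subseteq> A'" "measure M A' < measure M K + e / 3"
    using inner_regular_fmeasurable[OF sets_eq_borel A'_fin, of "e / 3"] \<open>e > 0\<close> by auto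
  obtain U where U: "open U" "A' \<subseteq> U" "U \<subseteq> ball 0 (real R)" "measure M U < measure M A' + e / 3"
    using outer_regular_fmeasurable[OF sets_eq_borel _ _ _ ball_fin, of A' "e / 3"] A'_fin \<open>e > 0\<close>
    by (auto simp: A'_def)
  have U_fin: "U \<in> fmeasurable M"
    using U ball_fin by (auto simp: sets_eq_borel intro: fmeasurableI2)
  have K_fin: "K \<in> fmeasurable M"
    using K(1) by (rule compact_fmeasurable)
  have "measure M (A - K) = measure M A - measure M K"
    using A K_fin K(2) by (intro measure_Diff) (auto simp: A'_def fmeasurableD2)
  moreover have "measure M (U - A) \<le> measure M (U - A')"
    using U_fin A A'_fin by (intro measure_mono_fmeasurable fmeasurable_Diff) (auto simp: A'_def)
  moreover have "measure M (U - A') = measure M U - measure M A'"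
    using U_fin A'_fin U(2) by (intro measure_Diff) (auto simp: fmeasurableD2)
  ultimately show ?thesis
    using K U R \<open>e > 0\<close> bounded_ball[THEN bounded_subset]
    by (intro that[of K U]) (auto simp: A'_def)
qed

lemma countable_dense_family:
  obtains D :: "nat \<Rightarrow> 'a set" where "\<And>j. D j \<in> fmeasurable M"
    "\<And>A e. A \<in> fmeasurable M \<Longrightarrow> e > 0 \<Longrightarrow> \<exists>j. measure M (A - D j) + measure M (D j - A) < e"
proof -
  obtain B :: "'a set set" where B: "countable B" "topological_basis B"
    using ex_countable_basis by blast
  define F where "F = Union ` {X. finite X \<and> X \<subseteq> B \<and> bounded (\<Union>X)}"
  have "countable F"
    unfolding F_def by (rule countable_image, rule countable_subset[OF _ countable_Collect_finite_subset[OF B(1)]]) auto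
  moreover have "{} \<in> F"
    unfolding F_def by (auto intro: image_eqI[of _ _ "{}"])
  ultimately have F: "range (from_nat_into F) = F"
    by (intro range_from_nat_into) auto
  have F_fin: "V \<in> fmeasurable M" if "V \<in> F" for V
    using that topological_basis_open[OF B(2)]
    by (auto simp: F_def intro!: fmeasurable_bounded borel_open)
  have "\<exists>j. measure M (A - from_nat_into F j) + measure M (from_nat_into F j - A) < e"
    if A: "A \<in> fmeasurable M" and "e > 0" for A e
  proof -
    obtain K U where KU: "compact K" "open U" "bounded U" "K \<subseteq> U"
      "measure M (A - K) + measure M (U - A) < e"
      using fmeasurable_approx_compact_open[OF A \<open>e > 0\<close>] .
    obtain X where X: "finite X" "X \<subseteq> B" "K \<subseteq> \<Union>X" "\<Union>X \<subseteq> U"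
      using compact_subset_finite_basis_union[OF B(2) KU(1,2,4)] .
    then have "\<Union>X \<in> F"
      using bounded_subset[OF KU(3)] by (auto simp: F_def)
    then obtain j where j: "from_nat_into F j = \<Union>X"
      using F by (metis rangeE)
    have U_fin: "U \<in> fmeasurable M"
      using KU by (simp add: fmeasurable_bounded borel_open)
    have "measure M (A - \<Union>X) \<le> measure M (A - K)"
      using A X(3) F_fin[OF \<open>\<Union>X \<in> F\<close>] compact_fmeasurable[OF KU(1)] by (intro measure_mono_fmeasurable fmeasurable_Diff) auto
    moreover have "measure M (\<Union>X - A) \<le> measure M (U - A)"
      using A X(4) U_fin F_fin[OF \<open>\<Union>X \<in> F\<close>] by (intro measure_mono_fmeasurable fmeasurable_Diff) auto
    ultimately show ?thesis
      using KU(5) j by (intro exI[of _ j]) auto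
  qed
  moreover have "from_nat_into F j \<in> fmeasurable M" for j
    using F F_fin by blast
  ultimately show ?thesis
    by (intro that[of "from_nat_into F"]) auto
qed

lemma asymptotically_halving_compact_pair:
  assumes "atomless M"
  obtains E1 E2 :: "nat \<Rightarrow> 'a set"
  where "\<And>n. compact (E1 n)" "\<And>n. compact (E2 n)" "\<And>n. setdist (E1 n) (E2 n) > 0"
    "asymptotically_halving M E1" "asymptotically_halving M E2"
proof -
  obtain D :: "nat \<Rightarrow> 'a set" where D: "\<And>j. D j \<in> fmeasurable M"
    and dense: "\<And>A e. A \<in> fmeasurable M \<Longrightarrow> e > 0 \<Longrightarrow>
                  \<exists>j. measure M (A - D j) + measure M (D j - A) < e"
    using countable_dense_family by blast
  have "\<exists>K1 K2. compact K1 \<and> compact K2 \<and> K1 \<inter> K2 = {} \<and>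
     (\<forall>K \<in> {K1, K2}. \<forall>j\<le>n. \<bar>measure M (K \<inter> D j) - measure M (D j) / 2\<bar> \<le> 1 / Suc n)" for n
  proof -
    let ?S = "\<Union>j\<le>n. D j"
    have "?S \<in> fmeasurable M"
      using D by (intro fmeasurable.finite_UN) auto
    moreover have "set (map D [0..<Suc n]) \<subseteq> sets borel"
      using D by (auto simp: sets_eq_borel[symmetric])
    ultimately obtain K1 K2 where K: "compact K1" "compact K2" "K1 \<inter> K2 = {}"
      and bound: "\<forall>K \<in> {K1, K2}. \<forall>D' \<in> insert UNIV (set (map D [0..<Suc n])).
                    \<bar>measure M (K \<inter> D') - measure M (?S \<inter> D') / 2\<bar> \<le> 1 / Suc n"
      using compact_halving_relative[OF assms, of ?S "1 / Suc n" "map D [0..<Suc n]"] by auto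
    have "\<bar>measure M (K \<inter> D j) - measure M (D j) / 2\<bar> \<le> 1 / Suc n"
      if "K \<in> {K1, K2}" "j \<le> n" for K j
    proof -
      have "D j \<in> set (map D [0..<Suc n])"
        unfolding set_map using \<open>j \<le> n\<close> by (intro imageI) auto
      moreover have "?S \<inter> D j = D j"
        using \<open>j \<le> n\<close> by blast
      ultimately show ?thesis
        using bound that(1) by fastforce
    qed
    then show ?thesis
      using K by blast
  qed
  then obtain K1 K2 where K: "\<And>n. compact (K1 n)" "\<And>n. compact (K2 n)" "\<And>n. K1 n \<inter> K2 n = {}"
    and halves: "\<And>n K j. K \<in> {K1 n, K2 n} \<Longrightarrow> j \<le> n \<Longrightarrow>
                   \<bar>measure M (K \<inter> D j) - measure M (D j) / 2\<bar> \<le> 1 / Suc n"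
    by metis
  \<comment> \<open>\<open>setdist\<close> is \<open>0\<close> as soon as one set is empty, so each set gets an extra point,
    far away and of measure zero\<close>
  have "bounded (K1 n \<union> K2 n)" for n
    using K by (simp add: compact_imp_bounded)
  then have "\<exists>a. a \<notin> K1 n \<union> K2 n \<and> - a \<notin> K1 n \<union> K2 n \<and> a \<noteq> - a" for n
    by (rule bounded_avoid_antipodal) blast
  then obtain a where a: "\<And>n. a n \<notin> K1 n \<union> K2 n" "\<And>n. - a n \<notin> K1 n \<union> K2 n" "\<And>n. a n \<noteq> - a n"
    by metis
  have null: "{x} \<in> null_sets M" for x
    using \<open>atomless M\<close> by (auto simp: atomless_def space_eq_UNIV sets_eq_borel)
  have K_sets: "K1 n \<in> sets M" "K2 n \<in> sets M" for n
    using K compact_fmeasurable by auto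
  show ?thesis
  proof (rule that[of "\<lambda>n. insert (a n) (K1 n)" "\<lambda>n. insert (- a n) (K2 n)"])
    show "compact (insert (a n) (K1 n))" "compact (insert (- a n) (K2 n))" for n
      using K by (simp_all add: compact_insert)
    then show "setdist (insert (a n) (K1 n)) (insert (- a n) (K2 n)) > 0" for n
      using K(3)[of n] a[of n] by (subst setdist_gt_0_compact_closed) (auto intro: compact_imp_closed)
    show "asymptotically_halving M (\<lambda>n. insert (a n) (K1 n))"
      using K_sets halves null
      by (intro asymptotically_halving_insert_null asymptotically_halving_if_dense[OF D dense]) auto
    show "asymptotically_halving M (\<lambda>n. insert (- a n) (K2 n))"
      using K_sets halves null
      by (intro asymptotically_halving_insert_null asymptotically_halving_if_dense[OF D dense]) auto
  qed
qed

end

lemma integrable_mult_if_in_L2: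
  assumes "in_Lp 2 M f" "in_Lp 2 M g"
  shows "integrable M (\<lambda>x. f x * g x)"
proof (rule Bochner_Integration.integrable_bound)
  show "integrable M (\<lambda>x. \<bar>f x\<bar> powr 2 + \<bar>g x\<bar> powr 2)"
    using assms unfolding in_Lp_def by (intro Bochner_Integration.integrable_add) auto
  show "(\<lambda>x. f x * g x) \<in> borel_measurable M"
    using assms unfolding in_Lp_def by (intro borel_measurable_times) auto
  have "\<bar>f x\<bar> * \<bar>g x\<bar> \<le> \<bar>f x\<bar>\<^sup>2 + \<bar>g x\<bar>\<^sup>2" for x
  proof -
    have "2 * (\<bar>f x\<bar> * \<bar>g x\<bar>) \<le> \<bar>f x\<bar>\<^sup>2 + \<bar>g x\<bar>\<^sup>2"
      using zero_le_power2[of "\<bar>f x\<bar> - \<bar>g x\<bar>"] by (simp add: power2_eq_square algebra_simps)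
    moreover have "0 \<le> \<bar>f x\<bar> * \<bar>g x\<bar>" by simp
    ultimately show ?thesis by linarith
  qed
  then show "AE x in M. norm (f x * g x) \<le> norm (\<bar>f x\<bar> powr 2 + \<bar>g x\<bar> powr 2)"
    by (intro AE_I2) (simp add: abs_mult)
qed

lemma Lp_norm_indicator_mult:
  "Lp_norm p M (\<lambda>x. indicator E x * f x) = (\<integral>x. indicator E x * \<bar>f x\<bar> powr p \<partial>M) powr (1 / p)"
proof -
  have "\<bar>indicator E x * f x\<bar> powr p = indicator E x * \<bar>f x\<bar> powr p" for x
    by (cases "x \<in> E") simp_all
  then show ?thesis
    by (simp add: Lp_norm_def)
qed

lemma Lp_norm_asymptotically_halving:
  assumes "asymptotically_halving M E" "\<And>n. E n \<in> sets M" "in_Lp p M f" "p > 0"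
  shows "(\<lambda>n. Lp_norm p M (\<lambda>x. indicator (E n) x * f x)) \<longlonglongrightarrow> 2 powr (-1/p) * Lp_norm p M f"
proof -
  define I where "I = (\<integral>x. \<bar>f x\<bar> powr p \<partial>M)"
  have "(\<lambda>n. \<integral>x. indicator (E n) x * \<bar>f x\<bar> powr p \<partial>M) \<longlonglongrightarrow> I / 2"
    using asymptotically_halving_integral[OF assms(1,2), of "\<lambda>x. \<bar>f x\<bar> powr p"] assms(3)
    by (simp add: in_Lp_def I_def)
  then have "(\<lambda>n. Lp_norm p M (\<lambda>x. indicator (E n) x * f x)) \<longlonglongrightarrow> (I / 2) powr (1 / p)"
    unfolding Lp_norm_indicator_mult using \<open>p > 0\<close>
    by (intro tendsto_powr2) (auto intro!: always_eventually integral_nonneg simp: I_def)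
  moreover have "(I / 2) powr (1 / p) = 2 powr (-1/p) * Lp_norm p M f"
  proof -
    have "(I / 2) powr (1 / p) = I powr (1 / p) / 2 powr (1 / p)"
      by (rule powr_divide)
    moreover have "2 powr (-1/p) = 1 / 2 powr (1 / p)"
      using powr_minus_divide[of 2 "1 / p"] by simp
    ultimately show ?thesis
      by (simp add: Lp_norm_def I_def)
  qed
  ultimately show ?thesis
    by simp
qed

theorem lemma3p1:
  fixes M :: "'a::euclidean_space measure"
  assumes "radon_measure M" and "atomless M"
  shows "\<exists>E :: nat \<Rightarrow> nat \<Rightarrow> 'a set.
     (\<forall>k\<in>{1,2}. \<forall>n. E k n \<in> sets borel) \<and>
     (\<forall>n. setdist (E 1 n) (E 2 n) > 0) \<and>
     (\<forall>k\<in>{1,2}. \<forall>f g. in_Lp 2 M f \<longrightarrow> in_Lp 2 M g \<longrightarrow>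
         (\<lambda>n. \<integral>x. indicator (E k n) x * f x * g x \<partial>M)
           \<longlonglongrightarrow> (1/2) * (\<integral>x. f x * g x \<partial>M)) \<and>
     (\<forall>p. 1 \<le> p \<longrightarrow> (\<forall>k\<in>{1,2}. \<forall>f. in_Lp p M f \<longrightarrow>
         (\<lambda>n. Lp_norm p M (\<lambda>x. indicator (E k n) x * f x))
           \<longlonglongrightarrow> 2 powr (-1/p) * Lp_norm p M f))"
proof -
  obtain E1 E2 :: "nat \<Rightarrow> 'a set" where E12: "\<And>n. compact (E1 n)" "\<And>n. compact (E2 n)"
    "\<And>n. setdist (E1 n) (E2 n) > 0" "asymptotically_halving M E1" "asymptotically_halving M E2"
    using asymptotically_halving_compact_pair[OF assms] by blast
  define E :: "nat \<Rightarrow> nat \<Rightarrow> 'a set" where "E k = (if k = 1 then E1 else E2)" for k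
  have borel: "E k n \<in> sets borel" for k n
    using E12 by (simp add: E_def borel_closed compact_imp_closed)
  then have sets: "E k n \<in> sets M" for k n
    using sets_eq_borel[OF assms(1)] by simp
  have halving: "asymptotically_halving M (E k)" for k
    using E12 by (simp add: E_def)
  show ?thesis
  proof (intro exI[of _ E] conjI ballI allI impI)
    show "setdist (E 1 n) (E 2 n) > 0" for n
      using E12 by (simp add: E_def)
    show "(\<lambda>n. \<integral>x. indicator (E k n) x * f x * g x \<partial>M) \<longlonglongrightarrow> (1/2) * (\<integral>x. f x * g x \<partial>M)"
      if "in_Lp 2 M f" "in_Lp 2 M g" for k f g
      using asymptotically_halving_integral[OF halving sets integrable_mult_if_in_L2[OF that]]
      by (simp add: mult.assoc)
    show "(\<lambda>n. Lp_norm p M (\<lambda>x. indicator (E k n) x * f x)) \<longlonglongrightarrow> 2 powr (-1/p) * Lp_norm p M f"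
      if "1 \<le> p" "in_Lp p M f" for p k f
      using Lp_norm_asymptotically_halving[OF halving sets that(2)] that(1) by simp
  qed (rule borel)
qed

end
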